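(* Let $\mathcal{F}\subseteq\mathcal{P}(\omega)$ be a free filter. Then $\mathcal{F}\times 2$ is homeomorphic to $\mathcal{F}$.
   Context: $\mathcal{P}(\omega)$ carries the Cantor set topology, obtained by identifying each subset of $\omega$ with its characteristic function in $2^\omega$; $\mathcal{F}$ has the subspace topology, and $2=\{0,1\}$ is discrete. A filter on $\omega$ is free if it contains all cofinite subsets of $\omega$ (and does not contain $\emptyset$). *)

theory Defs
  imports "HOL-Analysis.Analysis"
begin

definition two_top :: "nat topology" where
  "two_top = discrete_topology {0, 1}"

definition char_fun :: "nat set \<Rightarrow> (nat \<Rightarrow> nat)" where
  "char_fun A = (\<lambda>n. if n \<in> A then 1 else 0)"

definition cantor_powerset_top :: "nat set topology" where
  "cantor_powerset_top = pullback_topology UNIV char_fun (product_topology (\<lambda>_. two_top) UNIV)"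

definition free_filter :: "nat set set \<Rightarrow> bool" where
  "free_filter F \<longleftrightarrow>
     {} \<notin> F \<and>
     (\<forall>A B. A \<in> F \<and> B \<in> F \<longrightarrow> A \<inter> B \<in> F) \<and>
     (\<forall>A B. A \<in> F \<and> A \<subseteq> B \<longrightarrow> B \<in> F) \<and>
     (\<forall>A. finite (- A) \<longrightarrow> A \<in> F)"

end

theory Submission
  imports Defs
begin

(* Fix an injective sequence e, the track.  Shifting a set one step forward along the track and
   writing the extra bit into the vacated point e 0 only permutes coordinates, so it is a
   homeomorphism of P(omega) x 2 onto P(omega).  Off the track nothing moves, hence the shift
   preserves F as soon as the track is disjoint from a member of F.  If no member of F has infinite
   complement, F consists of cofinite sets, and shifting along any track preserves cofiniteness. *)

lemma topspace_cantor_powerset_top [simp]: "topspace cantor_powerset_top = UNIV"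
  by (auto simp: cantor_powerset_top_def topspace_pullback_topology two_top_def char_fun_def
      PiE_def extensional_def)

lemma topspace_two_top [simp]: "topspace two_top = {0, 1}"
  by (simp add: two_top_def)

lemma continuous_map_two_top_char_fun: "continuous_map two_top two_top (char_fun S)"
  by (simp add: two_top_def char_fun_def)

lemma continuous_map_char_fun_coordinate:
  "continuous_map cantor_powerset_top two_top (\<lambda>A. char_fun A n)"
proof -
  have "continuous_map cantor_powerset_top two_top ((\<lambda>x. x n) \<circ> char_fun)"
    unfolding cantor_powerset_top_def
    by (intro continuous_map_pullback continuous_map_product_projection) simp
  then show ?thesis
    by (simp add: o_def)
qed

lemma continuous_map_into_cantor_powerset_top:
  "continuous_map X cantor_powerset_top f \<longleftrightarrow> (\<forall>n. continuous_map X two_top (\<lambda>x. char_fun (f x) n))"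
proof
  assume "continuous_map X cantor_powerset_top f"
  then show "\<forall>n. continuous_map X two_top (\<lambda>x. char_fun (f x) n)"
    using continuous_map_compose[OF _ continuous_map_char_fun_coordinate] by (auto simp: o_def)
next
  assume "\<forall>n. continuous_map X two_top (\<lambda>x. char_fun (f x) n)"
  then show "continuous_map X cantor_powerset_top f"
    unfolding cantor_powerset_top_def
    by (intro continuous_map_pullback') (auto simp: continuous_map_componentwise_UNIV o_def)
qed

fun shift_in :: "(nat \<Rightarrow> nat) \<Rightarrow> nat set \<times> nat \<Rightarrow> nat set" where
  "shift_in e (A, i) = (A - range e) \<union> (if i = 1 then {e 0} else {}) \<union> (e \<circ> Suc) ` (e -` A)"

declare shift_in.simps [simp del]

definition shift_out :: "(nat \<Rightarrow> nat) \<Rightarrow> nat set \<Rightarrow> nat set \<times> nat" where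
  "shift_out e B = ((B - range e) \<union> e ` ((e \<circ> Suc) -` B), char_fun B (e 0))"

lemma snd_shift_out_in_two: "snd (shift_out e B) \<in> {0, 1}"
  by (simp add: shift_out_def char_fun_def)

lemma track_cases:
  obtains "n \<notin> range e" | "n = e 0" | m where "n = e (Suc m)"
  by (metis imageE not0_implies_Suc)

lemma mem_shift_in_off_track: "n \<notin> range e \<Longrightarrow> n \<in> shift_in e (A, i) \<longleftrightarrow> n \<in> A"
  by (auto simp: shift_in.simps)

lemma mem_shift_in_track_0: "inj e \<Longrightarrow> e 0 \<in> shift_in e (A, i) \<longleftrightarrow> i = 1"
  by (auto simp: shift_in.simps inj_eq)

lemma mem_shift_in_track_Suc: "inj e \<Longrightarrow> e (Suc m) \<in> shift_in e (A, i) \<longleftrightarrow> e m \<in> A"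
  by (auto simp: shift_in.simps inj_eq)

lemma mem_fst_shift_out_off_track: "n \<notin> range e \<Longrightarrow> n \<in> fst (shift_out e B) \<longleftrightarrow> n \<in> B"
  by (auto simp: shift_out_def)

lemma mem_fst_shift_out_track: "inj e \<Longrightarrow> e m \<in> fst (shift_out e B) \<longleftrightarrow> e (Suc m) \<in> B"
  by (auto simp: shift_out_def inj_eq)

lemma shift_out_shift_in:
  assumes "inj e" and "i \<in> {0, 1}"
  shows "shift_out e (shift_in e (A, i)) = (A, i)"
proof -
  have "n \<in> fst (shift_out e (shift_in e (A, i))) \<longleftrightarrow> n \<in> A" for n
    by (cases "n \<in> range e")
      (auto simp: mem_fst_shift_out_off_track mem_fst_shift_out_track mem_shift_in_off_track
        mem_shift_in_track_Suc assms(1))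
  moreover have "snd (shift_out e (shift_in e (A, i))) = i"
    using assms by (auto simp: shift_out_def char_fun_def mem_shift_in_track_0)
  ultimately show ?thesis
    by (simp add: prod_eq_iff set_eq_iff)
qed

lemma shift_in_shift_out:
  assumes "inj e"
  shows "shift_in e (shift_out e B) = B"
proof -
  obtain A i where Ai: "shift_out e B = (A, i)"
    by fastforce
  have "n \<in> shift_in e (A, i) \<longleftrightarrow> n \<in> B" for n
  proof (cases n e rule: track_cases)
    case 1
    then show ?thesis
      using Ai mem_shift_in_off_track mem_fst_shift_out_off_track by (metis fst_conv)
  next
    case 2
    have "i = char_fun B (e 0)"
      using Ai by (simp add: shift_out_def)
    then show ?thesis
      using 2 assms by (simp add: mem_shift_in_track_0 char_fun_def)
  next
    case (3 m)
    then show ?thesis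
      using Ai assms mem_shift_in_track_Suc mem_fst_shift_out_track by (metis fst_conv)
  qed
  then show ?thesis
    using Ai by auto
qed

lemma continuous_map_shift_in:
  assumes "inj e"
  shows "continuous_map (prod_topology cantor_powerset_top two_top) cantor_powerset_top (shift_in e)"
  unfolding continuous_map_into_cantor_powerset_top
proof
  fix n
  have fst_coordinate: "continuous_map (prod_topology cantor_powerset_top two_top) two_top
      (\<lambda>p. char_fun (fst p) k)" for k
    using continuous_map_compose[OF continuous_map_fst continuous_map_char_fun_coordinate]
    by (simp add: o_def)
  have snd_bit: "continuous_map (prod_topology cantor_powerset_top two_top) two_top
      (\<lambda>p. char_fun {1} (snd p))"
    using continuous_map_compose[OF continuous_map_snd continuous_map_two_top_char_fun]
    by (simp add: o_def)
  show "continuous_map (prod_topology cantor_powerset_top two_top) two_top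
      (\<lambda>p. char_fun (shift_in e p) n)"
  proof (cases n e rule: track_cases)
    case 1
    then have "char_fun (shift_in e p) n = char_fun (fst p) n" for p
      by (cases p) (simp add: char_fun_def mem_shift_in_off_track)
    then show ?thesis
      using fst_coordinate by presburger
  next
    case 2
    then have "char_fun (shift_in e p) n = char_fun {1} (snd p)" for p
      using assms by (cases p) (simp add: char_fun_def mem_shift_in_track_0)
    then show ?thesis
      using snd_bit by presburger
  next
    case (3 m)
    then have "char_fun (shift_in e p) n = char_fun (fst p) (e m)" for p
      using assms by (cases p) (simp add: char_fun_def mem_shift_in_track_Suc)
    then show ?thesis
      using fst_coordinate by presburger
  qed
qed

lemma continuous_map_shift_out:
  assumes "inj e"
  shows "continuous_map cantor_powerset_top (prod_topology cantor_powerset_top two_top) (shift_out e)"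
proof -
  have "continuous_map cantor_powerset_top two_top (\<lambda>B. char_fun (fst (shift_out e B)) n)" for n
  proof (cases "n \<in> range e")
    case True
    then obtain m where "n = e m"
      by blast
    then have "char_fun (fst (shift_out e B)) n = char_fun B (e (Suc m))" for B
      using assms by (simp add: char_fun_def mem_fst_shift_out_track)
    then show ?thesis
      using continuous_map_char_fun_coordinate by presburger
  next
    case False
    then have "char_fun (fst (shift_out e B)) n = char_fun B n" for B
      by (simp add: char_fun_def mem_fst_shift_out_off_track)
    then show ?thesis
      using continuous_map_char_fun_coordinate by presburger
  qed
  then have "continuous_map cantor_powerset_top cantor_powerset_top (fst \<circ> shift_out e)"
    by (simp add: continuous_map_into_cantor_powerset_top)
  moreover have "snd \<circ> shift_out e = (\<lambda>B. char_fun B (e 0))"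
    by (auto simp: shift_out_def)
  ultimately show ?thesis
    using continuous_map_char_fun_coordinate by (simp add: continuous_map_pairwise)
qed

lemma homeomorphic_maps_shift:
  assumes "inj e"
  shows "homeomorphic_maps (prod_topology cantor_powerset_top two_top) cantor_powerset_top
           (shift_in e) (shift_out e)"
  unfolding homeomorphic_maps_def
  using assms continuous_map_shift_in continuous_map_shift_out shift_out_shift_in shift_in_shift_out
  by auto

lemma shift_in_Int_off_track: "X \<inter> range e = {} \<Longrightarrow> shift_in e (A, i) \<inter> X = A \<inter> X"
  using mem_shift_in_off_track by blast

lemma fst_shift_out_Int_off_track: "X \<inter> range e = {} \<Longrightarrow> fst (shift_out e B) \<inter> X = B \<inter> X"
  using mem_fst_shift_out_off_track by blast

lemma finite_Compl_shift_in:
  assumes "inj e" and "finite (- A)"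
  shows "finite (- shift_in e (A, i))"
proof -
  have "- shift_in e (A, i) \<subseteq> - A \<union> {e 0} \<union> (e \<circ> Suc) ` (e -` (- A))"
  proof
    fix n
    assume "n \<in> - shift_in e (A, i)"
    then show "n \<in> - A \<union> {e 0} \<union> (e \<circ> Suc) ` (e -` (- A))"
      by (cases n e rule: track_cases)
        (auto simp: mem_shift_in_off_track mem_shift_in_track_Suc assms(1))
  qed
  moreover have "finite (e -` (- A))"
    using assms by (simp add: finite_vimageI)
  ultimately show ?thesis
    using assms(2) by (meson finite_Un finite_imageI finite.intros rev_finite_subset)
qed

lemma finite_Compl_fst_shift_out:
  assumes "inj e" and "finite (- B)"
  shows "finite (- fst (shift_out e B))"
proof -
  have "- fst (shift_out e B) \<subseteq> - B \<union> e ` ((e \<circ> Suc) -` (- B))"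
  proof
    fix n
    assume "n \<in> - fst (shift_out e B)"
    then show "n \<in> - B \<union> e ` ((e \<circ> Suc) -` (- B))"
      by (cases "n \<in> range e")
        (auto simp: mem_fst_shift_out_off_track mem_fst_shift_out_track assms(1))
  qed
  moreover have "finite ((e \<circ> Suc) -` (- B))"
    using assms by (intro finite_vimageI) (auto intro: inj_compose)
  ultimately show ?thesis
    using assms(2) by (meson finite_Un finite_imageI rev_finite_subset)
qed

lemma free_filter_shift_invariant_track:
  assumes "free_filter F"
  obtains e where "inj e"
    and "\<And>A i. A \<in> F \<Longrightarrow> shift_in e (A, i) \<in> F"
    and "\<And>B. B \<in> F \<Longrightarrow> fst (shift_out e B) \<in> F"
proof (cases "\<exists>X\<in>F. infinite (- X)")
  case True
  then obtain X where X: "X \<in> F" "infinite (- X)"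
    by blast
  define e where "e = enumerate (- X)"
  have "inj e"
    unfolding e_def using X(2) strict_mono_enumerate strict_mono_imp_inj_on by blast
  moreover have "X \<inter> range e = {}"
    unfolding e_def using range_enumerate[OF X(2)] by blast
  moreover have "C \<in> F" if "C \<inter> X = D \<inter> X" "D \<in> F" for C D
    using assms X(1) that unfolding free_filter_def by (metis inf_le1)
  ultimately show ?thesis
    using that shift_in_Int_off_track fst_shift_out_Int_off_track by metis
next
  case False
  then have "\<And>X. X \<in> F \<longleftrightarrow> finite (- X)"
    using assms unfolding free_filter_def by blast
  then show ?thesis
    using that[of id] finite_Compl_shift_in finite_Compl_fst_shift_out by simp
qed

theorem mainTheorem4:
  fixes F :: "nat set set"
  assumes "free_filter F"
  shows "prod_topology (subtopology cantor_powerset_top F) two_top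
           homeomorphic_space (subtopology cantor_powerset_top F)"
proof -
  obtain e where "inj e"
    and shift_in_F: "\<And>A i. A \<in> F \<Longrightarrow> shift_in e (A, i) \<in> F"
    and shift_out_F: "\<And>B. B \<in> F \<Longrightarrow> fst (shift_out e B) \<in> F"
    using free_filter_shift_invariant_track[OF assms] by blast
  have "shift_in e ` (topspace (prod_topology cantor_powerset_top two_top) \<inter> F \<times> topspace two_top)
      \<subseteq> F"
    using shift_in_F by auto
  moreover have "shift_out e ` (topspace cantor_powerset_top \<inter> F) \<subseteq> F \<times> topspace two_top"
    by (rule image_subsetI)
      (metis IntD2 mem_Times_iff shift_out_F snd_shift_out_in_two topspace_two_top)
  ultimately have "homeomorphic_maps
      (subtopology (prod_topology cantor_powerset_top two_top) (F \<times> topspace two_top))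
      (subtopology cantor_powerset_top F) (shift_in e) (shift_out e)"
    by (rule homeomorphic_maps_subtopologies_alt[OF homeomorphic_maps_shift[OF \<open>inj e\<close>]])
  then show ?thesis
    unfolding homeomorphic_space_def subtopology_Times subtopology_topspace by blast
qed

end
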